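(* Consider LPC-SVRG (defined in the context) and fix an epoch $s$ and inner index $t$. Let $d_\lambda\ge 0$ be a number such that almost surely, for every worker $i$, the number of coordinates of $u_t^i$ lying outside $[-2^{b-1}\delta,(2^{b-1}-1)\delta]$, where $\delta$ is the scale factor used to quantize $u_t^i$ (i.e. $\delta_t^i$ in scheme (a), $\delta_t$ in schemes (b),(c)), is at most $d_\lambda$. Then: (i) under communication scheme (a) or (b), $$\mathbf{E}\|v_t^{s+1}-\nabla f(x_t^{s+1})\|^2\le 2L^2\Big[\frac{d\lambda^2}{4(2^{b-1}-1)^2}+d_\lambda(1-\lambda)^2+\frac{1}{NB}\Big]\mathbf{E}\|x_t^{s+1}-\tilde x^s\|^2;$$ (ii) under communication scheme (c), $$\mathbf{E}\|v_t^{s+1}-\nabla f(x_t^{s+1})\|^2\le 2L^2\Big[\frac{3d\lambda^2}{8(2^{b-1}-1)^2}+d_\lambda(1-\lambda)^2+\frac{1}{NB}\Big]\mathbf{E}\|x_t^{s+1}-\tilde x^s\|^2.$$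
   Context: Problem setting: $f_1,\dots,f_n:\mathbb{R}^d\to\mathbb{R}$ are differentiable with $\|\nabla f_i(x)-\nabla f_i(y)\|\le L\|x-y\|$; $f=\frac1n\sum_i f_i$; $h:\mathbb{R}^d\to\mathbb{R}\cup\{+\infty\}$ is proper, convex and lower semicontinuous; $P=f+h$; $\mathrm{prox}_{\eta h}(x)=\arg\min_y\{h(y)+\frac{1}{2\eta}\|y-x\|^2\}$. Quantization: for an integer $b\ge2$ and $\delta>0$, $\mathrm{dom}(\delta,b)=\{k\delta:k\in\mathbb{Z},-2^{b-1}\le k\le 2^{b-1}-1\}$; the scalar quantizer $Q_{(\delta,b)}(x)$, for $x\in[-2^{b-1}\delta,(2^{b-1}-1)\delta]$ with $z$ the largest grid point $\le x$, equals $z$ with probability $\frac{z+\delta-x}{\delta}$ and $z+\delta$ otherwise; for $x$ outside this interval it equals the nearest grid point. On vectors it acts coordinatewise with independent randomness. If $\delta=0$ (which only occurs when the vector to be quantized is $0$) we set the output to $0$. LPC-SVRG with $N$ workers, parameters $S,m,B\in\mathbb{N}$, $\eta>0$, $\lambda\in(0,1]$, $b\ge 2$, starting point $\tilde x^0=x^0$: for $s=0,\dots,S-1$, set $x_0^{s+1}=\tilde x^s$ and compute $\nabla f(\tilde x^s)$ exactly; for $t=0,\dots,m-1$: each worker $i\in\{1,\dots,N\}$ draws $B$ indices independently and uniformly from $\{1,\dots,n\}$ (with replacement; independent across workers and iterations), forming the multiset $I_t^i$, and computes $u_t^i=\frac1B\sum_{a\in I_t^i}[\nabla f_a(x_t^{s+1})-\nabla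 f_a(\tilde x^s)]$; let $\delta_t^i=\frac{\lambda\|u_t^i\|_\infty}{2^{b-1}-1}$. Then $\tilde u_t$ is formed by one of three schemes: (a) $\tilde u_t=\frac1N\sum_i Q_{(\delta_t^i,b)}(u_t^i)$; (b) with $\delta_t=\max_i\delta_t^i$, $\tilde u_t=\frac1N\sum_i Q_{(\delta_t,b)}(u_t^i)$; (c) with $\delta_t=\max_i\delta_t^i$ and $\tilde u_t^i=Q_{(\delta_t,b)}(u_t^i)$, $\tilde u_t=Q_{(\delta_t,b)}\big(\frac1N\sum_i\tilde u_t^i\big)$ (with fresh independent rounding). All quantization roundings are independent of each other given the sampled indices. Then $v_t^{s+1}=\tilde u_t+\nabla f(\tilde x^s)$ and $x_{t+1}^{s+1}=\mathrm{prox}_{\eta h}(x_t^{s+1}-\eta v_t^{s+1})$. After the inner loop, $\tilde x^{s+1}=x_m^{s+1}$. The output $x_{out}$ is chosen uniformly at random from $\{x_t^{s+1}: 0\le t\le m-1,\ 0\le s\le S-1\}$. *)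

theory Defs
  imports "HOL-Analysis.Analysis" "HOL-Probability.Probability"
begin

datatype scheme = SchA | SchB | SchC

definition proper_fun :: "('a \<Rightarrow> ereal) \<Rightarrow> bool" where
  "proper_fun h \<longleftrightarrow> (\<forall>x. h x \<noteq> -\<infinity>) \<and> (\<exists>x. h x \<noteq> \<infinity>)"

definition convex_ereal :: "('a::real_vector \<Rightarrow> ereal) \<Rightarrow> bool" where
  "convex_ereal h \<longleftrightarrow> (\<forall>x y u. 0 < u \<and> u < 1 \<longrightarrow>
      h ((1 - u) *\<^sub>R x + u *\<^sub>R y) \<le> ereal (1 - u) * h x + ereal u * h y)"

definition lsc_fun :: "('a::topological_space \<Rightarrow> ereal) \<Rightarrow> bool" where
  "lsc_fun h \<longleftrightarrow> (\<forall>x. h x \<le> Liminf (at x) h)"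

definition prox :: "('a::real_normed_vector \<Rightarrow> ereal) \<Rightarrow> real \<Rightarrow> 'a \<Rightarrow> 'a" where
  "prox h eta y = (SOME z. \<forall>w. h z + ereal ((norm (z - y))\<^sup>2 / (2 * eta))
                              \<le> h w + ereal ((norm (w - y))\<^sup>2 / (2 * eta)))"

definition Qs :: "real \<Rightarrow> nat \<Rightarrow> real \<Rightarrow> real pmf" where
  "Qs \<delta> b x =
     (if \<delta> = 0 then return_pmf 0
      else if x < - ((2::real) ^ (b - 1)) * \<delta> then return_pmf (- ((2::real) ^ (b - 1)) * \<delta>)
      else if x > ((2::real) ^ (b - 1) - 1) * \<delta> then return_pmf (((2::real) ^ (b - 1) - 1) * \<delta>)
      else map_pmf (\<lambda>c. if c then \<delta> * of_int \<lfloor>x / \<delta>\<rfloor> + \<delta> else \<delta> * of_int \<lfloor>x / \<delta>\<rfloor>)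
             (bernoulli_pmf ((x - \<delta> * of_int \<lfloor>x / \<delta>\<rfloor>) / \<delta>)))"

definition Qv :: "real \<Rightarrow> nat \<Rightarrow> real ^ 'd \<Rightarrow> (real ^ 'd) pmf" where
  "Qv \<delta> b u = map_pmf (\<lambda>g. \<chi> j. g j) (Pi_pmf UNIV 0 (\<lambda>j. Qs \<delta> b (u $ j)))"

definition inf_norm :: "real ^ 'd \<Rightarrow> real" where
  "inf_norm u = Max (range (\<lambda>j. \<bar>u $ j\<bar>))"

definition gradF :: "(nat \<Rightarrow> real ^ 'd \<Rightarrow> real ^ 'd) \<Rightarrow> nat \<Rightarrow> real ^ 'd \<Rightarrow> real ^ 'd" where
  "gradF G n x = (1 / real n) *\<^sub>R (\<Sum>i<n. G i x)"

definition sample_pmf :: "nat \<Rightarrow> nat \<Rightarrow> (nat \<Rightarrow> nat) pmf" where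
  "sample_pmf n B = Pi_pmf {..<B} 0 (\<lambda>_. pmf_of_set {..<n})"

definition worker_u :: "(nat \<Rightarrow> real ^ 'd \<Rightarrow> real ^ 'd) \<Rightarrow> nat \<Rightarrow> (nat \<Rightarrow> nat)
    \<Rightarrow> real ^ 'd \<Rightarrow> real ^ 'd \<Rightarrow> real ^ 'd" where
  "worker_u G B I x xt = (1 / real B) *\<^sub>R (\<Sum>a<B. G (I a) x - G (I a) xt)"

definition delta_i :: "real \<Rightarrow> nat \<Rightarrow> real ^ 'd \<Rightarrow> real" where
  "delta_i lam b u = lam * inf_norm u / ((2::real) ^ (b - 1) - 1)"

definition delta_max :: "real \<Rightarrow> nat \<Rightarrow> nat \<Rightarrow> (nat \<Rightarrow> real ^ 'd) \<Rightarrow> real" where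
  "delta_max lam b N us = Max ((\<lambda>i. delta_i lam b (us i)) ` {..<N})"

definition scale :: "scheme \<Rightarrow> real \<Rightarrow> nat \<Rightarrow> nat \<Rightarrow> (nat \<Rightarrow> real ^ 'd) \<Rightarrow> nat \<Rightarrow> real" where
  "scale sch lam b N us i = (if sch = SchA then delta_i lam b (us i) else delta_max lam b N us)"

definition avg :: "nat \<Rightarrow> (nat \<Rightarrow> real ^ 'd) \<Rightarrow> real ^ 'd" where
  "avg N qs = (1 / real N) *\<^sub>R (\<Sum>i<N. qs i)"

(* One inner step at current iterate x with snapshot xt.
   Returns (u^1..u^N (as function on {..<N}, 0 elsewhere), v_t^{s+1}). *)
definition step :: "(nat \<Rightarrow> real ^ 'd \<Rightarrow> real ^ 'd) \<Rightarrow> nat \<Rightarrow> nat \<Rightarrow> nat \<Rightarrow> nat \<Rightarrow> real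
    \<Rightarrow> scheme \<Rightarrow> real ^ 'd \<Rightarrow> real ^ 'd \<Rightarrow> ((nat \<Rightarrow> real ^ 'd) \<times> (real ^ 'd)) pmf" where
  "step G n N B b lam sch x xt =
     bind_pmf (Pi_pmf {..<N} (\<lambda>_. 0) (\<lambda>_. sample_pmf n B)) (\<lambda>Is.
       let us = (\<lambda>i. if i < N then worker_u G B (Is i) x xt else 0) in
       bind_pmf (Pi_pmf {..<N} 0 (\<lambda>i. Qv (scale sch lam b N us i) b (us i))) (\<lambda>qs.
         bind_pmf (if sch = SchC then Qv (delta_max lam b N us) b (avg N qs)
                   else return_pmf (avg N qs)) (\<lambda>ut.
           return_pmf (us, ut + gradF G n xt))))"

(* distribution of x_t^{s+1} given snapshot xt = tilde x^s *)
primrec inner :: "(nat \<Rightarrow> real ^ 'd \<Rightarrow> real ^ 'd) \<Rightarrow> nat \<Rightarrow> nat \<Rightarrow> nat \<Rightarrow> nat \<Rightarrow> real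
    \<Rightarrow> scheme \<Rightarrow> (real ^ 'd \<Rightarrow> ereal) \<Rightarrow> real \<Rightarrow> real ^ 'd \<Rightarrow> nat \<Rightarrow> (real ^ 'd) pmf" where
  "inner G n N B b lam sch h eta xt 0 = return_pmf xt"
| "inner G n N B b lam sch h eta xt (Suc t) =
     bind_pmf (inner G n N B b lam sch h eta xt t) (\<lambda>x.
       map_pmf (\<lambda>(us, v). prox h eta (x - eta *\<^sub>R v)) (step G n N B b lam sch x xt))"

(* distribution of the snapshot tilde x^s *)
primrec snap :: "(nat \<Rightarrow> real ^ 'd \<Rightarrow> real ^ 'd) \<Rightarrow> nat \<Rightarrow> nat \<Rightarrow> nat \<Rightarrow> nat \<Rightarrow> real
    \<Rightarrow> scheme \<Rightarrow> (real ^ 'd \<Rightarrow> ereal) \<Rightarrow> real \<Rightarrow> nat \<Rightarrow> real ^ 'd \<Rightarrow> nat \<Rightarrow> (real ^ 'd) pmf" where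
  "snap G n N B b lam sch h eta m x0 0 = return_pmf x0"
| "snap G n N B b lam sch h eta m x0 (Suc s) =
     bind_pmf (snap G n N B b lam sch h eta m x0 s) (\<lambda>xt. inner G n N B b lam sch h eta xt m)"

(* joint distribution of (tilde x^s, x_t^{s+1}, (u_t^i)_i, v_t^{s+1}) *)
definition joint :: "(nat \<Rightarrow> real ^ 'd \<Rightarrow> real ^ 'd) \<Rightarrow> nat \<Rightarrow> nat \<Rightarrow> nat \<Rightarrow> nat \<Rightarrow> real
    \<Rightarrow> scheme \<Rightarrow> (real ^ 'd \<Rightarrow> ereal) \<Rightarrow> real \<Rightarrow> nat \<Rightarrow> real ^ 'd \<Rightarrow> nat \<Rightarrow> nat
    \<Rightarrow> ((real ^ 'd) \<times> (real ^ 'd) \<times> (nat \<Rightarrow> real ^ 'd) \<times> (real ^ 'd)) pmf" where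
  "joint G n N B b lam sch h eta m x0 s t =
     bind_pmf (snap G n N B b lam sch h eta m x0 s) (\<lambda>xt.
       bind_pmf (inner G n N B b lam sch h eta xt t) (\<lambda>x.
         map_pmf (\<lambda>(us, v). (xt, x, us, v)) (step G n N B b lam sch x xt)))"

definition n_out :: "real \<Rightarrow> nat \<Rightarrow> real ^ 'd \<Rightarrow> nat" where
  "n_out \<delta> b u = card {j. u $ j < - ((2::real) ^ (b - 1)) * \<delta> \<or> u $ j > ((2::real) ^ (b - 1) - 1) * \<delta>}"

end

theory Submission
  imports Defs
begin

text \<open>
  Write \<open>v - gradF x = (ut - avg us) + (avg us - (gradF x - gradF xt))\<close>, where \<open>us\<close> are the
  workers' messages and \<open>ut\<close> their quantized average, and use \<open>\<parallel>a + b\<parallel>\<^sup>2 \<le> 2\<parallel>a\<parallel>\<^sup>2 + 2\<parallel>b\<parallel>\<^sup>2\<close>.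
  The second term is the error of an average of \<open>N B\<close> independent uniform samples of
  \<open>G k x - G k xt\<close>, each of norm at most \<open>L \<parallel>x - xt\<parallel>\<close>, so its mean square is at most
  \<open>L\<^sup>2 \<parallel>x - xt\<parallel>\<^sup>2 / (N B)\<close>. For the first term, stochastic rounding with scale \<open>\<delta>\<close> is unbiased
  for the value saturated to the representable range and has variance at most \<open>\<delta>\<^sup>2 / 4\<close> per
  coordinate; averaging \<open>N\<close> independent quantizations divides this variance by \<open>N\<close>, and since
  \<open>\<lambda> \<parallel>u\<parallel>\<^sub>\<infinity> \<le> (2 ^ (b - 1) - 1) \<delta>\<close>, saturation moves each of the at most \<open>d_lam\<close> out-of-range
  coordinates by at most \<open>(1 - \<lambda>) \<parallel>u\<parallel>\<^sub>\<infinity>\<close>. Finally \<open>\<delta> \<le> \<lambda> L \<parallel>x - xt\<parallel> / (2 ^ (b - 1) - 1)\<close>.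
  All of this holds conditionally on the snapshot \<open>xt\<close> and the iterate \<open>x\<close>, hence also after
  taking expectations.
\<close>

section \<open>Expectations over finitely supported distributions\<close>

lemma expectation_bind_pmf_finite:
  fixes h :: "'b \<Rightarrow> 'c::{banach, second_countable_topology}"
  assumes "finite (set_pmf p)" "\<And>x. x \<in> set_pmf p \<Longrightarrow> finite (set_pmf (f x))"
  shows "measure_pmf.expectation (bind_pmf p f) h
       = measure_pmf.expectation p (\<lambda>x. measure_pmf.expectation (f x) h)"
  using assms
  by (subst pmf_expectation_bind[where A="set_pmf p"]) (auto simp: integral_measure_pmf[of "set_pmf p"])

lemma expectation_swap_finite:
  fixes h :: "'a \<Rightarrow> 'b \<Rightarrow> real"
  assumes "finite (set_pmf p)" "finite (set_pmf q)"
  shows "measure_pmf.expectation p (\<lambda>x. measure_pmf.expectation q (h x))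
       = measure_pmf.expectation q (\<lambda>y. measure_pmf.expectation p (\<lambda>x. h x y))"
proof -
  have "measure_pmf.expectation p (\<lambda>x. measure_pmf.expectation q (h x))
      = (\<Sum>x\<in>set_pmf p. pmf p x * (\<Sum>y\<in>set_pmf q. pmf q y * h x y))"
    using assms by (simp add: integral_measure_pmf[of "set_pmf p"] integral_measure_pmf[of "set_pmf q"])
  also have "\<dots> = (\<Sum>y\<in>set_pmf q. pmf q y * (\<Sum>x\<in>set_pmf p. pmf p x * h x y))"
    by (simp add: sum_distrib_left sum.swap[of _ "set_pmf p"] mult_ac)
  also have "\<dots> = measure_pmf.expectation q (\<lambda>y. measure_pmf.expectation p (\<lambda>x. h x y))"
    using assms by (simp add: integral_measure_pmf[of "set_pmf p"] integral_measure_pmf[of "set_pmf q"])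
  finally show ?thesis .
qed

lemma expectation_mono_finite:
  fixes f g :: "'a \<Rightarrow> real"
  assumes "finite (set_pmf p)" "\<And>x. x \<in> set_pmf p \<Longrightarrow> f x \<le> g x"
  shows "measure_pmf.expectation p f \<le> measure_pmf.expectation p g"
  using assms by (intro integral_mono_AE AE_pmfI integrable_measure_pmf_finite) auto

lemma expectation_Pi_pmf_component:
  fixes h :: "'b \<Rightarrow> 'c::{banach, second_countable_topology}"
  assumes "finite A" "i \<in> A"
  shows "measure_pmf.expectation (Pi_pmf A d p) (\<lambda>f. h (f i)) = measure_pmf.expectation (p i) h"
proof -
  have "measure_pmf.expectation (Pi_pmf A d p) (\<lambda>f. h (f i))
      = measure_pmf.expectation (map_pmf (\<lambda>f. f i) (Pi_pmf A d p)) h" by simp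
  also have "map_pmf (\<lambda>f. f i) (Pi_pmf A d p) = p i" using assms by (simp add: Pi_pmf_component)
  finally show ?thesis .
qed

lemma finite_set_Pi_pmf:
  assumes "finite A" "\<And>i. i \<in> A \<Longrightarrow> finite (set_pmf (p i))"
  shows "finite (set_pmf (Pi_pmf A d p))"
  using assms by (auto simp: set_Pi_pmf intro!: finite_PiE_dflt)

lemma set_Pi_pmf_component:
  assumes "f \<in> set_pmf (Pi_pmf A d p)" "finite A" "i \<in> A"
  shows "f i \<in> set_pmf (p i)"
  using assms by (auto simp: set_Pi_pmf PiE_dflt_def)

lemma power2_norm_add:
  fixes a b :: "'a::real_inner"
  shows "(norm (a + b))\<^sup>2 = (norm a)\<^sup>2 + 2 * (a \<bullet> b) + (norm b)\<^sup>2"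
  by (simp add: power2_norm_eq_inner inner_add_left inner_add_right inner_commute)

lemma power2_norm_add_le:
  fixes a b :: "'a::real_inner"
  shows "(norm (a + b))\<^sup>2 \<le> 2 * (norm a)\<^sup>2 + 2 * (norm b)\<^sup>2"
proof -
  have "(norm (a - b))\<^sup>2 = (norm a)\<^sup>2 - 2 * (a \<bullet> b) + (norm b)\<^sup>2"
    using power2_norm_add[of a "- b"] by simp
  then show ?thesis using power2_norm_add[of a b] zero_le_power2[of "norm (a - b)"] by linarith
qed

lemma power2_norm_sum_le:
  fixes a :: "'i \<Rightarrow> 'b::real_normed_vector"
  shows "(norm (\<Sum>i\<in>A. a i))\<^sup>2 \<le> real (card A) * (\<Sum>i\<in>A. (norm (a i))\<^sup>2)"
proof -
  have "(norm (\<Sum>i\<in>A. a i))\<^sup>2 \<le> (\<Sum>i\<in>A. norm (a i))\<^sup>2"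
    by (intro power_mono norm_sum) auto
  also have "\<dots> \<le> (\<Sum>i\<in>A. (norm (a i))\<^sup>2) * card A"
    by (rule sum_squared_le_sum_of_squares)
  finally show ?thesis by (simp add: mult.commute)
qed

lemma expectation_norm_diff_centred:
  fixes X :: "'a \<Rightarrow> 'b::real_inner"
  assumes fin: "finite (set_pmf p)"
    and centred: "\<And>c. measure_pmf.expectation p (\<lambda>x. (X x - m) \<bullet> c) = 0"
  shows "measure_pmf.expectation p (\<lambda>x. (norm (X x - a))\<^sup>2)
       = measure_pmf.expectation p (\<lambda>x. (norm (X x - m))\<^sup>2) + (norm (m - a))\<^sup>2"
proof -
  have "X x - a = (X x - m) + (m - a)" for x by simp
  then have "measure_pmf.expectation p (\<lambda>x. (norm (X x - a))\<^sup>2)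
      = measure_pmf.expectation p (\<lambda>x. (norm (X x - m))\<^sup>2 + 2 * ((X x - m) \<bullet> (m - a)) + (norm (m - a))\<^sup>2)"
    by (simp only: power2_norm_add)
  also have "\<dots> = measure_pmf.expectation p (\<lambda>x. (norm (X x - m))\<^sup>2)
      + 2 * measure_pmf.expectation p (\<lambda>x. (X x - m) \<bullet> (m - a)) + (norm (m - a))\<^sup>2"
    using fin by (simp add: integrable_measure_pmf_finite)
  finally show ?thesis by (simp add: centred)
qed

lemma expectation_norm_sum_Pi_pmf:
  fixes F :: "'i \<Rightarrow> 'a \<Rightarrow> 'b::real_inner"
  assumes "finite A" "\<And>i. i \<in> A \<Longrightarrow> finite (set_pmf (p i))"
    and "\<And>i c. i \<in> A \<Longrightarrow> measure_pmf.expectation (p i) (\<lambda>y. (F i y - \<mu> i) \<bullet> c) = 0"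
  shows "measure_pmf.expectation (Pi_pmf A d p) (\<lambda>f. (norm (\<Sum>i\<in>A. F i (f i) - \<mu> i))\<^sup>2)
       = (\<Sum>i\<in>A. measure_pmf.expectation (p i) (\<lambda>y. (norm (F i y - \<mu> i))\<^sup>2))"
  using assms
proof (induction A rule: finite_induct)
  case empty
  then show ?case by simp
next
  case (insert x A)
  let ?P = "Pi_pmf A d p"
  let ?S = "\<lambda>f. \<Sum>i\<in>A. F i (f i) - \<mu> i"
  let ?a = "\<lambda>y. F x y - \<mu> x"
  have finP: "finite (set_pmf ?P)" using insert by (intro finite_set_Pi_pmf) auto
  have finx: "finite (set_pmf (p x))" using insert by auto
  have "(\<Sum>i\<in>A. F i ((f(x := y)) i) - \<mu> i) = ?S f" for f y
    using insert by (intro sum.cong) auto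
  then have "measure_pmf.expectation (Pi_pmf (insert x A) d p) (\<lambda>f. (norm (\<Sum>i\<in>insert x A. F i (f i) - \<mu> i))\<^sup>2)
      = measure_pmf.expectation (p x) (\<lambda>y. measure_pmf.expectation ?P (\<lambda>f. (norm (?a y + ?S f))\<^sup>2))"
    using insert finP finx by (simp add: Pi_pmf_insert' expectation_bind_pmf_finite)
  also have "\<dots> = measure_pmf.expectation (p x) (\<lambda>y. (norm (?a y))\<^sup>2
       + 2 * measure_pmf.expectation ?P (\<lambda>f. ?a y \<bullet> ?S f) + measure_pmf.expectation ?P (\<lambda>f. (norm (?S f))\<^sup>2))"
    using finP by (simp add: power2_norm_add integrable_measure_pmf_finite)
  also have "\<dots> = measure_pmf.expectation (p x) (\<lambda>y. (norm (?a y))\<^sup>2)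
       + 2 * measure_pmf.expectation (p x) (\<lambda>y. measure_pmf.expectation ?P (\<lambda>f. ?a y \<bullet> ?S f))
       + measure_pmf.expectation ?P (\<lambda>f. (norm (?S f))\<^sup>2)"
    using finx by (simp add: integrable_measure_pmf_finite)
  also have "measure_pmf.expectation (p x) (\<lambda>y. measure_pmf.expectation ?P (\<lambda>f. ?a y \<bullet> ?S f))
       = measure_pmf.expectation ?P (\<lambda>f. measure_pmf.expectation (p x) (\<lambda>y. ?a y \<bullet> ?S f))"
    using finx finP by (rule expectation_swap_finite)
  also have "\<dots> = 0" using insert by simp
  finally show ?case using insert by simp
qed

lemma expectation_iid_average:
  fixes F :: "'a \<Rightarrow> 'b::real_inner"
  assumes K: "K \<ge> 1" and fin: "finite (set_pmf p)"
    and centred: "\<And>c. measure_pmf.expectation p (\<lambda>y. (F y - \<mu>) \<bullet> c) = 0"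
  shows "measure_pmf.expectation (Pi_pmf {..<K} d (\<lambda>_. p))
           (\<lambda>f. ((1 / real K) *\<^sub>R (\<Sum>i<K. F (f i)) - \<mu>) \<bullet> c) = 0"
    and "measure_pmf.expectation (Pi_pmf {..<K} d (\<lambda>_. p))
           (\<lambda>f. (norm ((1 / real K) *\<^sub>R (\<Sum>i<K. F (f i)) - \<mu>))\<^sup>2)
         = measure_pmf.expectation p (\<lambda>y. (norm (F y - \<mu>))\<^sup>2) / real K"
proof -
  let ?P = "Pi_pmf {..<K} d (\<lambda>_. p)"
  have avg: "(1 / real K) *\<^sub>R (\<Sum>i<K. F (f i)) - \<mu> = (1 / real K) *\<^sub>R (\<Sum>i<K. F (f i) - \<mu>)" for f
    using K by (simp add: sum_subtractf scaleR_diff_right sum_constant_scaleR)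
  have finP: "finite (set_pmf ?P)" using fin by (intro finite_set_Pi_pmf) auto
  have "measure_pmf.expectation ?P (\<lambda>f. ((1 / real K) *\<^sub>R (\<Sum>i<K. F (f i)) - \<mu>) \<bullet> c)
      = (1 / real K) * (\<Sum>i<K. measure_pmf.expectation ?P (\<lambda>f. (F (f i) - \<mu>) \<bullet> c))"
    unfolding avg using finP by (simp add: inner_sum_left integrable_measure_pmf_finite)
  also have "\<dots> = 0"
    by (simp add: expectation_Pi_pmf_component[where h="\<lambda>y. (F y - \<mu>) \<bullet> c"] centred)
  finally show "measure_pmf.expectation ?P (\<lambda>f. ((1 / real K) *\<^sub>R (\<Sum>i<K. F (f i)) - \<mu>) \<bullet> c) = 0" .
  have "measure_pmf.expectation ?P (\<lambda>f. (norm ((1 / real K) *\<^sub>R (\<Sum>i<K. F (f i)) - \<mu>))\<^sup>2)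
      = (1 / real K)\<^sup>2 * measure_pmf.expectation ?P (\<lambda>f. (norm (\<Sum>i<K. F (f i) - \<mu>))\<^sup>2)"
    unfolding avg by (simp only: norm_scaleR power_mult_distrib power2_abs) simp
  also have "measure_pmf.expectation ?P (\<lambda>f. (norm (\<Sum>i<K. F (f i) - \<mu>))\<^sup>2)
      = real K * measure_pmf.expectation p (\<lambda>y. (norm (F y - \<mu>))\<^sup>2)"
    using expectation_norm_sum_Pi_pmf[where F="\<lambda>_. F" and \<mu>="\<lambda>_. \<mu>" and A="{..<K}" and p="\<lambda>_. p"]
      fin centred by simp
  finally show "measure_pmf.expectation ?P (\<lambda>f. (norm ((1 / real K) *\<^sub>R (\<Sum>i<K. F (f i)) - \<mu>))\<^sup>2)
         = measure_pmf.expectation p (\<lambda>y. (norm (F y - \<mu>))\<^sup>2) / real K"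
    using K by (simp add: power2_eq_square)
qed

section \<open>Stochastic rounding\<close>

text \<open>The mean of \<open>Qs \<delta> b x\<close>: \<open>x\<close> saturated to the representable range.\<close>

definition clip :: "real \<Rightarrow> nat \<Rightarrow> real \<Rightarrow> real" where
  "clip \<delta> b x = min (((2::real) ^ (b - 1) - 1) * \<delta>) (max (- ((2::real) ^ (b - 1)) * \<delta>) x)"

lemma clip_in_range:
  assumes "- ((2::real) ^ (b - 1)) * \<delta> \<le> x" "x \<le> ((2::real) ^ (b - 1) - 1) * \<delta>"
  shows "clip \<delta> b x = x"
  using assms by (simp add: clip_def)

lemma quant_lower_le_upper:
  assumes "\<delta> \<ge> 0"
  shows "- ((2::real) ^ (b - 1)) * \<delta> \<le> ((2::real) ^ (b - 1) - 1) * \<delta>"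
proof -
  have "(1::real) \<le> 2 ^ (b - 1)" by simp
  then have "- ((2::real) ^ (b - 1)) \<le> (2::real) ^ (b - 1) - 1" by linarith
  then show ?thesis using assms by (rule mult_right_mono)
qed

lemma bernoulli_pmf_0: "bernoulli_pmf 0 = return_pmf False"
  by (rule pmf_eqI) (simp add: indicator_def)

lemma finite_set_Qs: "finite (set_pmf (Qs \<delta> b x))"
  unfolding Qs_def by auto

lemma expectation_Qs_in_range:
  assumes "\<delta> > 0" "- ((2::real) ^ (b - 1)) * \<delta> \<le> x" "x \<le> ((2::real) ^ (b - 1) - 1) * \<delta>"
  defines "p \<equiv> x / \<delta> - of_int \<lfloor>x / \<delta>\<rfloor>"
  shows "measure_pmf.expectation (Qs \<delta> b x) h
       = h (\<delta> * of_int \<lfloor>x / \<delta>\<rfloor> + \<delta>) * p + h (\<delta> * of_int \<lfloor>x / \<delta>\<rfloor>) * (1 - p)"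
proof -
  have "(x - \<delta> * of_int \<lfloor>x / \<delta>\<rfloor>) / \<delta> = p"
    using assms(1) by (simp add: p_def field_simps)
  moreover have "0 \<le> p" "p \<le> 1" unfolding p_def by linarith+
  ultimately show ?thesis using assms(1-3) unfolding Qs_def by simp
qed

lemma expectation_Qs:
  assumes "\<delta> \<ge> 0"
  shows "measure_pmf.expectation (Qs \<delta> b x) (\<lambda>z. z) = clip \<delta> b x"
proof (cases "\<delta> > 0 \<and> - ((2::real) ^ (b - 1)) * \<delta> \<le> x \<and> x \<le> ((2::real) ^ (b - 1) - 1) * \<delta>")
  case True
  then show ?thesis by (simp add: expectation_Qs_in_range clip_in_range field_simps)
next
  case False
  then show ?thesis using assms quant_lower_le_upper[OF assms, of b] unfolding Qs_def clip_def by auto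
qed

lemma variance_Qs_le:
  assumes "\<delta> \<ge> 0"
  shows "measure_pmf.expectation (Qs \<delta> b x) (\<lambda>z. (z - clip \<delta> b x)\<^sup>2) \<le> \<delta>\<^sup>2 / 4"
proof (cases "\<delta> > 0 \<and> - ((2::real) ^ (b - 1)) * \<delta> \<le> x \<and> x \<le> ((2::real) ^ (b - 1) - 1) * \<delta>")
  case True
  define p where "p = x / \<delta> - of_int \<lfloor>x / \<delta>\<rfloor>"
  have x: "x = \<delta> * of_int \<lfloor>x / \<delta>\<rfloor> + p * \<delta>" using True by (simp add: p_def field_simps)
  have "measure_pmf.expectation (Qs \<delta> b x) (\<lambda>z. (z - clip \<delta> b x)\<^sup>2)
      = (\<delta> * of_int \<lfloor>x / \<delta>\<rfloor> + \<delta> - x)\<^sup>2 * p + (\<delta> * of_int \<lfloor>x / \<delta>\<rfloor> - x)\<^sup>2 * (1 - p)"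
    using True by (simp add: expectation_Qs_in_range clip_in_range p_def)
  also have "\<dots> = \<delta>\<^sup>2 * (1/4 - (p - 1/2)\<^sup>2)"
    by (subst (2 4) x) (simp add: power2_eq_square algebra_simps)
  also have "\<dots> \<le> \<delta>\<^sup>2 / 4" by (simp add: algebra_simps)
  finally show ?thesis .
next
  case False
  then show ?thesis using assms quant_lower_le_upper[OF assms, of b] unfolding Qs_def clip_def by auto
qed

lemma set_pmf_Qs:
  assumes "\<delta> \<ge> 0" "z \<in> set_pmf (Qs \<delta> b x)"
  shows "- ((2::real) ^ (b - 1)) * \<delta> \<le> z" "z \<le> ((2::real) ^ (b - 1) - 1) * \<delta>"
    and "\<exists>k::int. z = \<delta> * of_int k"
proof -
  define K :: int where "K = 2 ^ (b - 1) - 1"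
  have lo: "- ((2::real) ^ (b - 1)) * \<delta> = \<delta> * of_int (- K - 1)"
   and hi: "((2::real) ^ (b - 1) - 1) * \<delta> = \<delta> * of_int K" by (simp_all add: K_def algebra_simps)
  have "\<exists>k. z = \<delta> * of_int k \<and> - K - 1 \<le> k \<and> k \<le> K"
  proof (cases "\<delta> > 0 \<and> - ((2::real) ^ (b - 1)) * \<delta> \<le> x \<and> x \<le> ((2::real) ^ (b - 1) - 1) * \<delta>")
    case True
    define k where "k = \<lfloor>x / \<delta>\<rfloor>"
    have range: "of_int (- K - 1) \<le> x / \<delta>" "x / \<delta> \<le> of_int K"
      using True unfolding lo hi by (simp_all add: field_simps)
    then have k: "- K - 1 \<le> k" "k \<le> K" unfolding k_def by (simp_all add: le_floor_iff floor_le_iff)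
    define p where "p = (x - \<delta> * of_int k) / \<delta>"
    have "p = x / \<delta> - of_int k" using True by (simp add: p_def field_simps)
    moreover have "of_int k \<le> x / \<delta>" "x / \<delta> < of_int k + 1" unfolding k_def by linarith+
    ultimately have p: "0 \<le> p" "p < 1" "0 < p \<Longrightarrow> of_int k < x / \<delta>" by linarith+
    have "z \<in> (\<lambda>c. if c then \<delta> * of_int k + \<delta> else \<delta> * of_int k) ` set_pmf (bernoulli_pmf p)"
      using assms(2) True unfolding Qs_def k_def[symmetric] p_def[symmetric] by auto
    moreover have "True \<in> set_pmf (bernoulli_pmf p) \<Longrightarrow> 0 < p"
      using p by (simp add: set_pmf_iff)
    ultimately have "z = \<delta> * of_int k \<or> z = \<delta> * of_int (k + 1) \<and> of_int k < x / \<delta>"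
      using p(3) by (auto simp: algebra_simps)
    then show ?thesis
    proof
      assume "z = \<delta> * of_int (k + 1) \<and> of_int k < x / \<delta>"
      moreover from this have "k + 1 \<le> K" using range(2) by linarith
      ultimately show ?thesis using k by (intro exI[of _ "k + 1"]) auto
    qed (use k in auto)
  next
    case False
    then have "z = \<delta> * of_int (- K - 1) \<or> z = \<delta> * of_int K"
      using assms unfolding Qs_def lo hi by (auto split: if_splits)
    moreover have "0 \<le> K" by (simp add: K_def)
    ultimately show ?thesis by (auto intro: exI[of _ "- K - 1"] exI[of _ K])
  qed
  then obtain k where "z = \<delta> * of_int k" "- K - 1 \<le> k" "k \<le> K" by blast
  then show "- ((2::real) ^ (b - 1)) * \<delta> \<le> z" "z \<le> ((2::real) ^ (b - 1) - 1) * \<delta>"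
    and "\<exists>k::int. z = \<delta> * of_int k"
    unfolding lo hi using assms(1) by (auto intro: mult_left_mono)
qed

lemma Qs_idem:
  assumes "\<delta> \<ge> 0" "z \<in> set_pmf (Qs \<delta> b x)"
  shows "Qs \<delta> b z = return_pmf z"
proof -
  obtain k :: int where k: "z = \<delta> * of_int k" using set_pmf_Qs(3)[OF assms] by blast
  show ?thesis
  proof (cases "\<delta> = 0")
    case False
    then show ?thesis
      using set_pmf_Qs(1,2)[OF assms] assms(1) unfolding k Qs_def by (auto simp: bernoulli_pmf_0)
  qed (simp add: k Qs_def)
qed

lemma clip_error_le:
  assumes "\<delta> \<ge> 0" "lam \<le> 1" "\<bar>x\<bar> \<le> M" "lam * M \<le> ((2::real) ^ (b - 1) - 1) * \<delta>"
  shows "(clip \<delta> b x - x)\<^sup>2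
       \<le> (if x < - ((2::real) ^ (b - 1)) * \<delta> \<or> x > ((2::real) ^ (b - 1) - 1) * \<delta>
          then ((1 - lam) * M)\<^sup>2 else 0)"
proof -
  define lo hi where "lo = - ((2::real) ^ (b - 1)) * \<delta>" and "hi = ((2::real) ^ (b - 1) - 1) * \<delta>"
  have "lo \<le> - hi" using assms(1) by (simp add: lo_def hi_def algebra_simps)
  moreover have "lam * M \<le> 1 * M" using assms(2,3) by (intro mult_right_mono) auto
  ultimately have "\<bar>min hi (max lo x) - x\<bar> \<le> M - lam * M"
    using assms(3,4) unfolding hi_def[symmetric] by (auto simp: min_def max_def abs_le_iff)
  then have "\<bar>clip \<delta> b x - x\<bar> \<le> (1 - lam) * M"
    unfolding clip_def lo_def hi_def by (simp add: algebra_simps)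
  then have "(clip \<delta> b x - x)\<^sup>2 \<le> ((1 - lam) * M)\<^sup>2"
    using assms(2,3) by (subst power2_le_iff_abs_le) auto
  then show ?thesis by (auto simp: clip_def)
qed

section \<open>Coordinatewise quantization of vectors\<close>

definition clipv :: "real \<Rightarrow> nat \<Rightarrow> real ^ 'd \<Rightarrow> real ^ 'd" where
  "clipv \<delta> b u = (\<chi> j. clip \<delta> b (u $ j))"

lemma power2_norm_vec: "(norm (x :: real ^ 'd))\<^sup>2 = (\<Sum>j\<in>UNIV. (x $ j)\<^sup>2)"
  by (simp only: power2_norm_eq_inner inner_vec_def) (simp add: power2_eq_square)

lemma finite_set_Qv: "finite (set_pmf (Qv \<delta> b u))"
  unfolding Qv_def by (auto intro!: finite_set_Pi_pmf finite_set_Qs)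

lemma set_pmf_Qv: "q \<in> set_pmf (Qv \<delta> b u) \<Longrightarrow> q $ j \<in> set_pmf (Qs \<delta> b (u $ j))"
  unfolding Qv_def by (auto simp: set_Pi_pmf PiE_dflt_def)

lemma expectation_Qv_sum:
  fixes h :: "'d::finite \<Rightarrow> real \<Rightarrow> real" and u :: "real ^ 'd"
  shows "measure_pmf.expectation (Qv \<delta> b u) (\<lambda>q. \<Sum>j\<in>UNIV. h j (q $ j))
       = (\<Sum>j\<in>UNIV. measure_pmf.expectation (Qs \<delta> b (u $ j)) (h j))"
proof -
  let ?P = "Pi_pmf UNIV 0 (\<lambda>j. Qs \<delta> b (u $ j))"
  have "finite (set_pmf ?P)" by (auto intro!: finite_set_Pi_pmf finite_set_Qs)
  then have "measure_pmf.expectation ?P (\<lambda>g. \<Sum>j\<in>UNIV. h j (g j))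
      = (\<Sum>j\<in>UNIV. measure_pmf.expectation ?P (\<lambda>g. h j (g j)))"
    by (simp add: integrable_measure_pmf_finite)
  then show ?thesis
    by (simp add: Qv_def expectation_Pi_pmf_component[where h="h _"])
qed

lemma Qv_centred:
  assumes "\<delta> \<ge> 0"
  shows "measure_pmf.expectation (Qv \<delta> b u) (\<lambda>q. (q - clipv \<delta> b u) \<bullet> c) = 0"
proof -
  have "measure_pmf.expectation (Qv \<delta> b u) (\<lambda>q. (q - clipv \<delta> b u) \<bullet> c)
      = (\<Sum>j\<in>UNIV. measure_pmf.expectation (Qs \<delta> b (u $ j)) (\<lambda>z. (z - clip \<delta> b (u $ j)) * c $ j))"
    using expectation_Qv_sum[where h="\<lambda>j z. (z - clip \<delta> b (u $ j)) * c $ j"]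
    by (simp add: inner_vec_def clipv_def)
  also have "\<dots> = (\<Sum>j\<in>UNIV. (measure_pmf.expectation (Qs \<delta> b (u $ j)) (\<lambda>z. z) - clip \<delta> b (u $ j)) * c $ j)"
    by (simp add: integrable_measure_pmf_finite finite_set_Qs left_diff_distrib)
  finally show ?thesis by (simp add: expectation_Qs[OF assms])
qed

lemma variance_Qv_le:
  fixes u :: "real ^ 'd"
  assumes "\<delta> \<ge> 0"
  shows "measure_pmf.expectation (Qv \<delta> b u) (\<lambda>q. (norm (q - clipv \<delta> b u))\<^sup>2)
       \<le> real CARD('d) * (\<delta>\<^sup>2 / 4)"
proof -
  have "measure_pmf.expectation (Qv \<delta> b u) (\<lambda>q. (norm (q - clipv \<delta> b u))\<^sup>2)
      = (\<Sum>j\<in>UNIV. measure_pmf.expectation (Qs \<delta> b (u $ j)) (\<lambda>z. (z - clip \<delta> b (u $ j))\<^sup>2))"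
    using expectation_Qv_sum[where h="\<lambda>j z. (z - clip \<delta> b (u $ j))\<^sup>2"]
    by (simp add: power2_norm_vec clipv_def)
  also have "\<dots> \<le> (\<Sum>j\<in>(UNIV :: 'd set). \<delta>\<^sup>2 / 4)"
    by (intro sum_mono variance_Qs_le assms)
  finally show ?thesis by simp
qed

lemma Qv_idem:
  assumes "\<delta> \<ge> 0" "q \<in> set_pmf (Qv \<delta> b u)"
  shows "Qv \<delta> b q = return_pmf q"
  using Qs_idem[OF assms(1) set_pmf_Qv[OF assms(2)]] by (simp add: Qv_def)

lemma component_le_inf_norm: "\<bar>u $ j\<bar> \<le> inf_norm (u :: real ^ 'd)"
  unfolding inf_norm_def by (rule Max_ge) auto

lemma inf_norm_nonneg: "0 \<le> inf_norm (u :: real ^ 'd)"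
  using component_le_inf_norm[of u] abs_ge_zero order_trans by blast

lemma inf_norm_le_norm: "inf_norm (u :: real ^ 'd) \<le> norm u"
proof -
  have "inf_norm u \<in> range (\<lambda>j. \<bar>u $ j\<bar>)" unfolding inf_norm_def by (rule Max_in) auto
  then show ?thesis by (auto simp: component_le_norm_cart)
qed

lemma clipv_error_le:
  fixes u :: "real ^ 'd"
  assumes "\<delta> \<ge> 0" "lam \<le> 1" "lam * inf_norm u \<le> ((2::real) ^ (b - 1) - 1) * \<delta>"
  shows "(norm (clipv \<delta> b u - u))\<^sup>2 \<le> real (n_out \<delta> b u) * ((1 - lam) * inf_norm u)\<^sup>2"
proof -
  let ?out = "\<lambda>j. u $ j < - ((2::real) ^ (b - 1)) * \<delta> \<or> u $ j > ((2::real) ^ (b - 1) - 1) * \<delta>"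
  have "(norm (clipv \<delta> b u - u))\<^sup>2 = (\<Sum>j\<in>UNIV. (clip \<delta> b (u $ j) - u $ j)\<^sup>2)"
    by (simp add: power2_norm_vec clipv_def)
  also have "\<dots> \<le> (\<Sum>j\<in>UNIV. if ?out j then ((1 - lam) * inf_norm u)\<^sup>2 else 0)"
    by (intro sum_mono clip_error_le assms component_le_inf_norm)
  also have "\<dots> = real (card {j. ?out j}) * ((1 - lam) * inf_norm u)\<^sup>2"
    by (simp add: sum.If_cases)
  finally show ?thesis by (simp add: n_out_def)
qed

section \<open>Variance of the minibatch estimator\<close>

lemma set_pmf_of_lessThan: "(n::nat) \<ge> 1 \<Longrightarrow> set_pmf (pmf_of_set {..<n}) = {..<n}"
  by (intro set_pmf_of_set) (auto simp: lessThan_empty_iff)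

lemma expectation_pmf_of_lessThan:
  "(n::nat) \<ge> 1 \<Longrightarrow> measure_pmf.expectation (pmf_of_set {..<n}) (h :: nat \<Rightarrow> real) = (\<Sum>k<n. h k) / real n"
  by (subst integral_pmf_of_set) (auto simp: lessThan_empty_iff)

lemma finite_set_sample_pmf: "n \<ge> 1 \<Longrightarrow> finite (set_pmf (sample_pmf n B))"
  unfolding sample_pmf_def by (rule finite_set_Pi_pmf) (auto simp: set_pmf_of_lessThan)

lemma set_sample_pmf: "I \<in> set_pmf (sample_pmf n B) \<Longrightarrow> n \<ge> 1 \<Longrightarrow> a < B \<Longrightarrow> I a < n"
  unfolding sample_pmf_def by (drule set_Pi_pmf_component) (auto simp: set_pmf_of_lessThan)

lemma uniform_index_centred:
  fixes g :: "nat \<Rightarrow> 'b::real_inner"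
  assumes "n \<ge> 1"
  shows "measure_pmf.expectation (pmf_of_set {..<n}) (\<lambda>k. (g k - (1 / real n) *\<^sub>R (\<Sum>k<n. g k)) \<bullet> c) = 0"
  using assms
  by (simp add: expectation_pmf_of_lessThan inner_diff_left sum_subtractf inner_sum_left[symmetric])

lemma minibatch_average_variance:
  fixes g :: "nat \<Rightarrow> 'b::real_inner"
  assumes n: "n \<ge> 1" and B: "B \<ge> 1" and N: "N \<ge> 1"
  defines "\<mu> \<equiv> (1 / real n) *\<^sub>R (\<Sum>k<n. g k)"
  shows "measure_pmf.expectation (Pi_pmf {..<N} d (\<lambda>_. sample_pmf n B))
           (\<lambda>Is. (norm ((1 / real N) *\<^sub>R (\<Sum>i<N. (1 / real B) *\<^sub>R (\<Sum>a<B. g (Is i a))) - \<mu>))\<^sup>2)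
         \<le> (\<Sum>k<n. (norm (g k))\<^sup>2) / (real n * real N * real B)"
proof -
  let ?U = "pmf_of_set {..<n}"
  have centred: "measure_pmf.expectation ?U (\<lambda>k. (g k - \<mu>) \<bullet> c) = 0" for c
    unfolding \<mu>_def using n by (rule uniform_index_centred)
  have fin: "finite (set_pmf ?U)" using n by (simp add: set_pmf_of_lessThan)
  have "measure_pmf.expectation ?U (\<lambda>k. (norm (g k - 0))\<^sup>2)
      = measure_pmf.expectation ?U (\<lambda>k. (norm (g k - \<mu>))\<^sup>2) + (norm (\<mu> - 0))\<^sup>2"
    by (rule expectation_norm_diff_centred[OF fin centred])
  then have var: "measure_pmf.expectation ?U (\<lambda>k. (norm (g k - \<mu>))\<^sup>2) \<le> (\<Sum>k<n. (norm (g k))\<^sup>2) / real n"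
    using n by (simp add: expectation_pmf_of_lessThan)
  have "measure_pmf.expectation (Pi_pmf {..<N} d (\<lambda>_. sample_pmf n B))
           (\<lambda>Is. (norm ((1 / real N) *\<^sub>R (\<Sum>i<N. (1 / real B) *\<^sub>R (\<Sum>a<B. g (Is i a))) - \<mu>))\<^sup>2)
      = measure_pmf.expectation (sample_pmf n B) (\<lambda>I. (norm ((1 / real B) *\<^sub>R (\<Sum>a<B. g (I a)) - \<mu>))\<^sup>2) / real N"
    using expectation_iid_average(1)[OF B fin centred] n
    by (intro expectation_iid_average(2)[OF N]) (simp_all add: finite_set_sample_pmf[unfolded sample_pmf_def] sample_pmf_def)
  also have "\<dots> = measure_pmf.expectation ?U (\<lambda>k. (norm (g k - \<mu>))\<^sup>2) / real B / real N"
    using expectation_iid_average(2)[OF B fin centred] by (simp add: sample_pmf_def)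
  also have "\<dots> \<le> (\<Sum>k<n. (norm (g k))\<^sup>2) / real n / real B / real N"
    using var by (intro divide_right_mono) auto
  finally show ?thesis by (simp add: field_simps)
qed

section \<open>Averaging independently quantized messages\<close>

lemma expectation_avg_independent_le:
  fixes us m :: "nat \<Rightarrow> real ^ 'd" and p :: "nat \<Rightarrow> (real ^ 'd) pmf"
  assumes N: "N \<ge> 1"
    and fin: "\<And>i. i < N \<Longrightarrow> finite (set_pmf (p i))"
    and centred: "\<And>i c. i < N \<Longrightarrow> measure_pmf.expectation (p i) (\<lambda>q. (q - m i) \<bullet> c) = 0"
    and variance: "\<And>i. i < N \<Longrightarrow> measure_pmf.expectation (p i) (\<lambda>q. (norm (q - m i))\<^sup>2) \<le> V"
    and bias: "\<And>i. i < N \<Longrightarrow> (norm (m i - us i))\<^sup>2 \<le> \<beta>"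
  shows "measure_pmf.expectation (Pi_pmf {..<N} d p) (\<lambda>qs. (norm (avg N qs - avg N us))\<^sup>2) \<le> V / real N + \<beta>"
proof -
  let ?P = "Pi_pmf {..<N} d p"
  have finP: "finite (set_pmf ?P)" using fin by (intro finite_set_Pi_pmf) auto
  have diff: "avg N f - avg N g = (1 / real N) *\<^sub>R (\<Sum>i<N. f i - g i)" for f g :: "nat \<Rightarrow> real ^ 'd"
    by (simp add: avg_def sum_subtractf scaleR_diff_right)
  have norm_diff: "(norm (avg N f - avg N g))\<^sup>2 = (norm (\<Sum>i<N. f i - g i))\<^sup>2 / (real N)\<^sup>2"
    for f g :: "nat \<Rightarrow> real ^ 'd"
    unfolding diff by (simp add: power_divide power_mult_distrib)
  have "measure_pmf.expectation ?P (\<lambda>qs. (avg N qs - avg N m) \<bullet> c) = 0" for c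
  proof -
    have "measure_pmf.expectation ?P (\<lambda>qs. (avg N qs - avg N m) \<bullet> c)
        = (1 / real N) * (\<Sum>i<N. measure_pmf.expectation ?P (\<lambda>qs. (qs i - m i) \<bullet> c))"
      unfolding diff using finP by (simp add: inner_sum_left integrable_measure_pmf_finite)
    then show ?thesis
      by (simp add: expectation_Pi_pmf_component[where h="\<lambda>q. (q - m _) \<bullet> c"] centred)
  qed
  then have "measure_pmf.expectation ?P (\<lambda>qs. (norm (avg N qs - avg N us))\<^sup>2)
      = measure_pmf.expectation ?P (\<lambda>qs. (norm (avg N qs - avg N m))\<^sup>2) + (norm (avg N m - avg N us))\<^sup>2"
    by (rule expectation_norm_diff_centred[OF finP])
  also have "measure_pmf.expectation ?P (\<lambda>qs. (norm (avg N qs - avg N m))\<^sup>2)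
      = (\<Sum>i<N. measure_pmf.expectation (p i) (\<lambda>q. (norm (q - m i))\<^sup>2)) / (real N)\<^sup>2"
    unfolding norm_diff
    using expectation_norm_sum_Pi_pmf[where F="\<lambda>_ q. q" and \<mu>=m and A="{..<N}" and p=p and d=d] fin centred
    by simp
  also have "\<dots> \<le> real N * V / (real N)\<^sup>2"
    using sum_mono[of "{..<N}", OF variance] by (intro divide_right_mono) auto
  also have "(norm (avg N m - avg N us))\<^sup>2 \<le> real N * (real N * \<beta>) / (real N)\<^sup>2"
    unfolding norm_diff
    using power2_norm_sum_le[of "\<lambda>i. m i - us i" "{..<N}"] sum_mono[of "{..<N}", OF bias]
    by (intro divide_right_mono) (auto elim!: order_trans intro!: mult_left_mono)
  finally show ?thesis using N by (simp add: power2_eq_square)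
qed

lemma independent_quantization_error_le:
  fixes us :: "nat \<Rightarrow> real ^ 'd"
  assumes N: "N \<ge> 1" and lam: "lam \<le> 1"
    and \<delta>: "\<And>i. i < N \<Longrightarrow> 0 \<le> \<delta>s i \<and> \<delta>s i \<le> \<Delta>"
    and scale: "\<And>i. i < N \<Longrightarrow> lam * inf_norm (us i) \<le> ((2::real) ^ (b - 1) - 1) * \<delta>s i"
    and M: "\<And>i. i < N \<Longrightarrow> inf_norm (us i) \<le> M"
    and out: "\<And>i. i < N \<Longrightarrow> real (n_out (\<delta>s i) b (us i)) \<le> d_lam"
  shows "measure_pmf.expectation (Pi_pmf {..<N} 0 (\<lambda>i. Qv (\<delta>s i) b (us i)))
           (\<lambda>qs. (norm (avg N qs - avg N us))\<^sup>2)
       \<le> real CARD('d) * (\<Delta>\<^sup>2 / 4) / real N + d_lam * ((1 - lam) * M)\<^sup>2"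
proof (rule expectation_avg_independent_le[OF N finite_set_Qv])
  fix i assume i: "i < N"
  show "measure_pmf.expectation (Qv (\<delta>s i) b (us i)) (\<lambda>q. (q - clipv (\<delta>s i) b (us i)) \<bullet> c) = 0" for c
    using \<delta>[OF i] by (simp add: Qv_centred)
  have "measure_pmf.expectation (Qv (\<delta>s i) b (us i)) (\<lambda>q. (norm (q - clipv (\<delta>s i) b (us i)))\<^sup>2)
      \<le> real CARD('d) * ((\<delta>s i)\<^sup>2 / 4)"
    using \<delta>[OF i] by (intro variance_Qv_le) auto
  also have "\<dots> \<le> real CARD('d) * (\<Delta>\<^sup>2 / 4)"
    using \<delta>[OF i] by (intro mult_left_mono divide_right_mono power_mono) auto
  finally show "measure_pmf.expectation (Qv (\<delta>s i) b (us i)) (\<lambda>q. (norm (q - clipv (\<delta>s i) b (us i)))\<^sup>2)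
      \<le> real CARD('d) * (\<Delta>\<^sup>2 / 4)" .
  have "(norm (clipv (\<delta>s i) b (us i) - us i))\<^sup>2 \<le> real (n_out (\<delta>s i) b (us i)) * ((1 - lam) * inf_norm (us i))\<^sup>2"
    using \<delta>[OF i] lam scale[OF i] by (intro clipv_error_le) auto
  also have "\<dots> \<le> d_lam * ((1 - lam) * M)\<^sup>2"
    using lam out[OF i] M[OF i] inf_norm_nonneg[of "us i"]
    by (intro mult_mono power_mono mult_left_mono) auto
  finally show "(norm (clipv (\<delta>s i) b (us i) - us i))\<^sup>2 \<le> d_lam * ((1 - lam) * M)\<^sup>2" .
qed

lemma clipv_avg_quantized:
  fixes us :: "nat \<Rightarrow> real ^ 'd"
  assumes N: "N \<ge> 1" and \<delta>: "\<delta> \<ge> 0"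
    and qs: "qs \<in> set_pmf (Pi_pmf {..<N} 0 (\<lambda>i. Qv \<delta> b (us i)))"
  shows "clipv \<delta> b (avg N qs) = avg N qs"
proof -
  let ?lo = "- ((2::real) ^ (b - 1)) * \<delta>" and ?hi = "((2::real) ^ (b - 1) - 1) * \<delta>"
  have "?lo \<le> qs i $ j \<and> qs i $ j \<le> ?hi" if "i < N" for i j
    using set_pmf_Qs(1,2)[OF \<delta> set_pmf_Qv[OF set_Pi_pmf_component[OF qs]]] that by auto
  then have "real N * ?lo \<le> (\<Sum>i<N. qs i $ j) \<and> (\<Sum>i<N. qs i $ j) \<le> real N * ?hi" for j
    using sum_mono[of "{..<N}" "\<lambda>_. ?lo" "\<lambda>i. qs i $ j"] sum_mono[of "{..<N}" "\<lambda>i. qs i $ j" "\<lambda>_. ?hi"]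
    by auto
  then have "?lo \<le> avg N qs $ j \<and> avg N qs $ j \<le> ?hi" for j
    using N by (simp add: avg_def field_simps)
  then show ?thesis by (simp add: clipv_def clip_in_range vec_eq_iff)
qed

lemma expectation_requantize_le:
  fixes us :: "nat \<Rightarrow> real ^ 'd"
  assumes N: "N \<ge> 1" and \<delta>: "\<delta> \<ge> 0"
    and qs: "qs \<in> set_pmf (Pi_pmf {..<N} 0 (\<lambda>i. Qv \<delta> b (us i)))"
  shows "measure_pmf.expectation (Qv \<delta> b (avg N qs)) (\<lambda>q. (norm (q - a))\<^sup>2)
       \<le> (if N = 1 then 0 else real CARD('d) * (\<delta>\<^sup>2 / 4)) + (norm (avg N qs - a))\<^sup>2"
proof -
  have clip: "clipv \<delta> b (avg N qs) = avg N qs" using clipv_avg_quantized[OF N \<delta> qs] .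
  have "measure_pmf.expectation (Qv \<delta> b (avg N qs)) (\<lambda>q. (norm (q - a))\<^sup>2)
      = measure_pmf.expectation (Qv \<delta> b (avg N qs)) (\<lambda>q. (norm (q - avg N qs))\<^sup>2) + (norm (avg N qs - a))\<^sup>2"
    using Qv_centred[OF \<delta>, of b "avg N qs"] unfolding clip
    by (intro expectation_norm_diff_centred finite_set_Qv)
  moreover have "measure_pmf.expectation (Qv \<delta> b (avg N qs)) (\<lambda>q. (norm (q - avg N qs))\<^sup>2)
      \<le> (if N = 1 then 0 else real CARD('d) * (\<delta>\<^sup>2 / 4))"
  proof (cases "N = 1")
    case True
    then have "avg N qs \<in> set_pmf (Qv \<delta> b (us 0))"
      using set_Pi_pmf_component[OF qs] by (simp add: avg_def)
    then show ?thesis using True by (simp add: Qv_idem[OF \<delta>])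
  qed (use variance_Qv_le[OF \<delta>, of b "avg N qs"] clip in simp)
  ultimately show ?thesis by simp
qed

text \<open>In scheme (c) the server requantizes an average that already lies in the representable
  range: this adds a variance of at most \<open>d \<delta>\<^sup>2 / 4\<close>, and none at all for \<open>N = 1\<close> (the average is
  then a grid point), so in total at most \<open>d \<delta>\<^sup>2 (1 / (4N) + [N \<ge> 2] / 4) \<le> 3 d \<delta>\<^sup>2 / 8\<close>.\<close>

lemma requantization_error_le:
  fixes us :: "nat \<Rightarrow> real ^ 'd"
  assumes N: "N \<ge> 1" and lam: "lam \<le> 1" and \<delta>: "0 \<le> \<delta>" "\<delta> \<le> \<Delta>"
    and scale: "\<And>i. i < N \<Longrightarrow> lam * inf_norm (us i) \<le> ((2::real) ^ (b - 1) - 1) * \<delta>"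
    and M: "\<And>i. i < N \<Longrightarrow> inf_norm (us i) \<le> M"
    and out: "\<And>i. i < N \<Longrightarrow> real (n_out \<delta> b (us i)) \<le> d_lam"
  shows "measure_pmf.expectation (Pi_pmf {..<N} 0 (\<lambda>i. Qv \<delta> b (us i)))
           (\<lambda>qs. measure_pmf.expectation (Qv \<delta> b (avg N qs)) (\<lambda>q. (norm (q - avg N us))\<^sup>2))
       \<le> 3 * real CARD('d) * \<Delta>\<^sup>2 / 8 + d_lam * ((1 - lam) * M)\<^sup>2"
proof -
  let ?Q = "Pi_pmf {..<N} 0 (\<lambda>i. Qv \<delta> b (us i))"
  let ?V = "if N = 1 then 0 else real CARD('d) * (\<Delta>\<^sup>2 / 4)"
  have finQ: "finite (set_pmf ?Q)" by (auto intro!: finite_set_Pi_pmf finite_set_Qv)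
  have "(if N = 1 then 0 else real CARD('d) * (\<delta>\<^sup>2 / 4)) \<le> ?V"
    using \<delta> by (auto intro!: mult_left_mono divide_right_mono power_mono)
  then have requantize: "measure_pmf.expectation (Qv \<delta> b (avg N qs)) (\<lambda>q. (norm (q - avg N us))\<^sup>2)
      \<le> ?V + (norm (avg N qs - avg N us))\<^sup>2" if "qs \<in> set_pmf ?Q" for qs
    using expectation_requantize_le[OF N \<delta>(1) that, of "avg N us"] by linarith
  have "measure_pmf.expectation ?Q (\<lambda>qs. measure_pmf.expectation (Qv \<delta> b (avg N qs)) (\<lambda>q. (norm (q - avg N us))\<^sup>2))
      \<le> measure_pmf.expectation ?Q (\<lambda>qs. ?V + (norm (avg N qs - avg N us))\<^sup>2)"
    by (rule expectation_mono_finite[OF finQ requantize])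
  also have "\<dots> = ?V + measure_pmf.expectation ?Q (\<lambda>qs. (norm (avg N qs - avg N us))\<^sup>2)"
    using finQ by (simp add: integrable_measure_pmf_finite)
  also have "\<dots> \<le> ?V + (real CARD('d) * (\<Delta>\<^sup>2 / 4) / real N + d_lam * ((1 - lam) * M)\<^sup>2)"
    using independent_quantization_error_le[OF N lam, of "\<lambda>_. \<delta>" \<Delta> us b M d_lam] \<delta> scale M out by simp
  also have "\<dots> \<le> 3 * real CARD('d) * \<Delta>\<^sup>2 / 8 + d_lam * ((1 - lam) * M)\<^sup>2"
  proof (cases "N = 1")
    case False
    then have "real CARD('d) * (\<Delta>\<^sup>2 / 4) / real N \<le> real CARD('d) * (\<Delta>\<^sup>2 / 4) / 2"
      using N by (intro divide_left_mono) auto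
    then show ?thesis using False by simp
  qed simp
  finally show ?thesis by simp
qed

section \<open>One inner step of LPC-SVRG\<close>

definition messages :: "(nat \<Rightarrow> real ^ 'd \<Rightarrow> real ^ 'd) \<Rightarrow> nat \<Rightarrow> nat \<Rightarrow> (nat \<Rightarrow> nat \<Rightarrow> nat)
    \<Rightarrow> real ^ 'd \<Rightarrow> real ^ 'd \<Rightarrow> nat \<Rightarrow> real ^ 'd" where
  "messages G B N Is x xt = (\<lambda>i. if i < N then worker_u G B (Is i) x xt else 0)"

definition quantized_avg :: "scheme \<Rightarrow> real \<Rightarrow> nat \<Rightarrow> nat \<Rightarrow> (nat \<Rightarrow> real ^ 'd) \<Rightarrow> (real ^ 'd) pmf" where
  "quantized_avg sch lam b N us =
     bind_pmf (Pi_pmf {..<N} 0 (\<lambda>i. Qv (scale sch lam b N us i) b (us i))) (\<lambda>qs.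
       if sch = SchC then Qv (delta_max lam b N us) b (avg N qs) else return_pmf (avg N qs))"

definition quant_factor :: "scheme \<Rightarrow> real" where
  "quant_factor sch = (if sch = SchC then 3 / 8 else 1 / 4)"

lemma step_eq:
  "step G n N B b lam sch x xt =
     bind_pmf (Pi_pmf {..<N} (\<lambda>_. 0) (\<lambda>_. sample_pmf n B)) (\<lambda>Is.
       map_pmf (\<lambda>ut. (messages G B N Is x xt, ut + gradF G n xt))
         (quantized_avg sch lam b N (messages G B N Is x xt)))"
  unfolding step_def quantized_avg_def messages_def Let_def map_pmf_def by (simp add: bind_assoc_pmf)

lemma finite_set_quantized_avg: "finite (set_pmf (quantized_avg sch lam b N us))"
  unfolding quantized_avg_def by (auto intro!: finite_set_Pi_pmf simp: finite_set_Qv)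

lemma finite_set_workers_sample:
  "n \<ge> 1 \<Longrightarrow> finite (set_pmf (Pi_pmf {..<N :: nat} d (\<lambda>_. sample_pmf n B)))"
  by (rule finite_set_Pi_pmf) (auto simp: finite_set_sample_pmf)

lemma expectation_step:
  fixes H :: "(nat \<Rightarrow> real ^ 'd) \<Rightarrow> real ^ 'd \<Rightarrow> real"
  assumes "n \<ge> 1"
  shows "measure_pmf.expectation (step G n N B b lam sch x xt) (\<lambda>(us, v). H us v)
       = measure_pmf.expectation (Pi_pmf {..<N} (\<lambda>_. 0) (\<lambda>_. sample_pmf n B)) (\<lambda>Is.
           measure_pmf.expectation (quantized_avg sch lam b N (messages G B N Is x xt))
             (\<lambda>ut. H (messages G B N Is x xt) (ut + gradF G n xt)))"
  using assms unfolding step_eq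
  by (simp add: expectation_bind_pmf_finite finite_set_workers_sample finite_set_quantized_avg)

lemma messages_in_set_step:
  assumes "Is \<in> set_pmf (Pi_pmf {..<N} (\<lambda>_. 0) (\<lambda>_. sample_pmf n B))"
  shows "\<exists>v. (messages G B N Is x xt, v) \<in> set_pmf (step G n N B b lam sch x xt)"
  using assms set_pmf_not_empty[of "quantized_avg sch lam b N (messages G B N Is x xt)"]
  unfolding step_eq by auto

lemma norm_worker_u_le:
  assumes lip: "\<And>k. k < n \<Longrightarrow> norm (G k x - G k xt) \<le> R"
    and I: "\<And>a. a < B \<Longrightarrow> I a < n" and B: "B \<ge> 1"
  shows "norm (worker_u G B I x xt) \<le> R"
proof -
  have "norm (worker_u G B I x xt) \<le> (1 / real B) * (\<Sum>a<B. norm (G (I a) x - G (I a) xt))"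
    unfolding worker_u_def using norm_sum[of "\<lambda>a. G (I a) x - G (I a) xt" "{..<B}"]
    by (simp add: divide_right_mono)
  also have "\<dots> \<le> (1 / real B) * (\<Sum>a<B. R)"
    using lip I by (intro mult_left_mono sum_mono) auto
  finally show ?thesis using B by simp
qed

lemma expectation_sampling_error_le:
  assumes n: "n \<ge> 1" and N: "N \<ge> 1" and B: "B \<ge> 1"
    and lip: "\<And>k. k < n \<Longrightarrow> norm (G k x - G k xt) \<le> R"
  shows "measure_pmf.expectation (Pi_pmf {..<N} (\<lambda>_. 0) (\<lambda>_. sample_pmf n B))
           (\<lambda>Is. (norm (avg N (messages G B N Is x xt) - (gradF G n x - gradF G n xt)))\<^sup>2)
       \<le> R\<^sup>2 / (real N * real B)"
proof -
  let ?g = "\<lambda>k. G k x - G k xt"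
  have avg: "avg N (messages G B N Is x xt) = (1 / real N) *\<^sub>R (\<Sum>i<N. (1 / real B) *\<^sub>R (\<Sum>a<B. ?g (Is i a)))" for Is
    by (simp add: avg_def messages_def worker_u_def)
  have grad: "gradF G n x - gradF G n xt = (1 / real n) *\<^sub>R (\<Sum>k<n. ?g k)"
    by (simp add: gradF_def sum_subtractf scaleR_diff_right)
  have "(\<Sum>k<n. (norm (?g k))\<^sup>2) \<le> (\<Sum>k<n. R\<^sup>2)"
    using lip by (intro sum_mono power_mono) auto
  then have bound: "(\<Sum>k<n. (norm (?g k))\<^sup>2) / (real n * real N * real B) \<le> R\<^sup>2 / (real N * real B)"
    using n N B by (simp add: field_simps)
  show ?thesis
    unfolding avg grad by (rule order_trans[OF minibatch_average_variance[OF n B N] bound])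
qed

lemma delta_i_bounds:
  fixes u :: "real ^ 'd"
  assumes b: "b \<ge> 2" and lam: "0 \<le> lam" and M: "inf_norm u \<le> M"
  defines "K \<equiv> (2::real) ^ (b - 1) - 1"
  shows "lam * inf_norm u = K * delta_i lam b u" and "0 \<le> delta_i lam b u"
    and "delta_i lam b u \<le> lam * M / K"
proof -
  have "(2::real) ^ 1 \<le> 2 ^ (b - 1)" using b by (intro power_increasing) auto
  then have K: "K \<ge> 1" by (simp add: K_def)
  have delta: "delta_i lam b u = lam * inf_norm u / K" by (simp add: delta_i_def K_def)
  show "lam * inf_norm u = K * delta_i lam b u" unfolding delta using K by simp
  show "0 \<le> delta_i lam b u" unfolding delta using lam K inf_norm_nonneg[of u] by simp
  show "delta_i lam b u \<le> lam * M / K"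
    unfolding delta using M lam K by (intro divide_right_mono mult_left_mono) auto
qed

lemma delta_max_bounds:
  fixes us :: "nat \<Rightarrow> real ^ 'd"
  assumes N: "N \<ge> 1" and b: "b \<ge> 2" and lam: "0 \<le> lam"
    and M: "\<And>i. i < N \<Longrightarrow> inf_norm (us i) \<le> M" and i: "i < N"
  defines "K \<equiv> (2::real) ^ (b - 1) - 1"
  shows "delta_i lam b (us i) \<le> delta_max lam b N us" and "0 \<le> delta_max lam b N us"
    and "delta_max lam b N us \<le> lam * M / K"
proof -
  have fin: "finite ((\<lambda>i. delta_i lam b (us i)) ` {..<N})" "(\<lambda>i. delta_i lam b (us i)) ` {..<N} \<noteq> {}"
    using N by (auto simp: lessThan_empty_iff)
  show ge: "delta_i lam b (us i) \<le> delta_max lam b N us"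
    unfolding delta_max_def using fin i by (intro Max_ge) auto
  show "0 \<le> delta_max lam b N us"
    using ge delta_i_bounds(2)[OF b lam M[OF i]] by linarith
  show "delta_max lam b N us \<le> lam * M / K"
    unfolding delta_max_def K_def using fin delta_i_bounds(3)[OF b lam M] by (subst Max_le_iff) auto
qed

lemma scale_bounds:
  fixes us :: "nat \<Rightarrow> real ^ 'd"
  assumes N: "N \<ge> 1" and b: "b \<ge> 2" and lam: "0 \<le> lam"
    and M: "\<And>i. i < N \<Longrightarrow> inf_norm (us i) \<le> M" and i: "i < N"
  defines "K \<equiv> (2::real) ^ (b - 1) - 1"
  shows "0 \<le> scale sch lam b N us i \<and> scale sch lam b N us i \<le> lam * M / K
       \<and> lam * inf_norm (us i) \<le> K * scale sch lam b N us i"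
proof -
  have "(2::real) ^ 1 \<le> 2 ^ (b - 1)" using b by (intro power_increasing) auto
  then have "K \<ge> 0" by (simp add: K_def)
  then have "K * delta_i lam b (us i) \<le> K * delta_max lam b N us"
    by (intro mult_left_mono delta_max_bounds(1)[OF N b lam M i])
  then show ?thesis
    using delta_i_bounds[OF b lam M[OF i]] delta_max_bounds(2,3)[OF N b lam M i]
    unfolding K_def scale_def by auto
qed

lemma expectation_quantized_avg_le:
  fixes us :: "nat \<Rightarrow> real ^ 'd"
  assumes N: "N \<ge> 1" and b: "b \<ge> 2" and lam: "0 \<le> lam" "lam \<le> 1"
    and M: "\<And>i. i < N \<Longrightarrow> inf_norm (us i) \<le> M"
    and out: "\<And>i. i < N \<Longrightarrow> real (n_out (scale sch lam b N us i) b (us i)) \<le> d_lam"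
  defines "K \<equiv> (2::real) ^ (b - 1) - 1"
  shows "measure_pmf.expectation (quantized_avg sch lam b N us) (\<lambda>ut. (norm (ut - avg N us))\<^sup>2)
       \<le> quant_factor sch * real CARD('d) * (lam * M / K)\<^sup>2 + d_lam * ((1 - lam) * M)\<^sup>2"
proof (cases "sch = SchC")
  case True
  define \<delta> where "\<delta> = delta_max lam b N us"
  have scale: "scale sch lam b N us i = \<delta>" for i using True by (simp add: scale_def \<delta>_def)
  have \<delta>: "0 \<le> \<delta>" "\<delta> \<le> lam * M / K"
    using delta_max_bounds(2,3)[where us=us and M=M and i=0, OF N b lam(1) M] N by (simp_all add: \<delta>_def K_def)
  have "measure_pmf.expectation (quantized_avg sch lam b N us) (\<lambda>ut. (norm (ut - avg N us))\<^sup>2)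
      = measure_pmf.expectation (Pi_pmf {..<N} 0 (\<lambda>i. Qv \<delta> b (us i)))
          (\<lambda>qs. measure_pmf.expectation (Qv \<delta> b (avg N qs)) (\<lambda>q. (norm (q - avg N us))\<^sup>2))"
    unfolding quantized_avg_def scale using True
    by (simp add: \<delta>_def[symmetric] expectation_bind_pmf_finite finite_set_Pi_pmf finite_set_Qv)
  also have "\<dots> \<le> 3 * real CARD('d) * (lam * M / K)\<^sup>2 / 8 + d_lam * ((1 - lam) * M)\<^sup>2"
    using scale_bounds[where us=us and M=M and sch=sch, OF N b lam(1) M] M out unfolding scale K_def
    by (intro requantization_error_le[OF N lam(2) \<delta>[unfolded K_def]]) auto
  finally show ?thesis using True by (simp add: quant_factor_def)
next
  case False
  note bounds = scale_bounds[where us=us and M=M and sch=sch, OF N b lam(1) M]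
  have "measure_pmf.expectation (quantized_avg sch lam b N us) (\<lambda>ut. (norm (ut - avg N us))\<^sup>2)
      \<le> real CARD('d) * ((lam * M / K)\<^sup>2 / 4) / real N + d_lam * ((1 - lam) * M)\<^sup>2"
  proof -
    have "quantized_avg sch lam b N us = map_pmf (avg N) (Pi_pmf {..<N} 0 (\<lambda>i. Qv (scale sch lam b N us i) b (us i)))"
      using False by (simp add: quantized_avg_def map_pmf_def)
    then show ?thesis
      by (simp only: integral_map_pmf) (rule independent_quantization_error_le[OF N lam(2)], use bounds M out in \<open>auto simp: K_def\<close>)
  qed
  also have "real CARD('d) * ((lam * M / K)\<^sup>2 / 4) / real N \<le> real CARD('d) * ((lam * M / K)\<^sup>2 / 4) / 1"
    using N by (intro divide_left_mono) auto
  finally show ?thesis using False by (simp add: quant_factor_def)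
qed

lemma expectation_quantized_messages_le:
  fixes G :: "nat \<Rightarrow> real ^ 'd \<Rightarrow> real ^ 'd" and x xt :: "real ^ 'd"
  assumes n: "n \<ge> 1" and N: "N \<ge> 1" and B: "B \<ge> 1" and b: "b \<ge> 2" and lam: "0 \<le> lam" "lam \<le> 1"
    and lip: "\<And>k. k < n \<Longrightarrow> norm (G k x - G k xt) \<le> R"
    and out: "\<And>us v i. (us, v) \<in> set_pmf (step G n N B b lam sch x xt) \<Longrightarrow> i < N
                \<Longrightarrow> real (n_out (scale sch lam b N us i) b (us i)) \<le> d_lam"
    and Is: "Is \<in> set_pmf (Pi_pmf {..<N} (\<lambda>_. 0) (\<lambda>_. sample_pmf n B))"
  shows "measure_pmf.expectation (quantized_avg sch lam b N (messages G B N Is x xt))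
           (\<lambda>ut. (norm (ut - avg N (messages G B N Is x xt)))\<^sup>2)
       \<le> quant_factor sch * real CARD('d) * (lam * R / ((2::real) ^ (b - 1) - 1))\<^sup>2 + d_lam * ((1 - lam) * R)\<^sup>2"
proof (rule expectation_quantized_avg_le[OF N b lam])
  fix i assume i: "i < N"
  have "Is i a < n" if "a < B" for a
    using set_sample_pmf[OF set_Pi_pmf_component[OF Is _] n that] i by simp
  then have "norm (worker_u G B (Is i) x xt) \<le> R"
    using norm_worker_u_le[where G=G and x=x and xt=xt and R=R and I="Is i"] lip B by blast
  then show "inf_norm (messages G B N Is x xt i) \<le> R"
    using inf_norm_le_norm[of "worker_u G B (Is i) x xt"] i by (simp add: messages_def)
  show "real (n_out (scale sch lam b N (messages G B N Is x xt) i) b (messages G B N Is x xt i)) \<le> d_lam"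
    using messages_in_set_step[OF Is] out i by blast
qed

lemma expectation_step_le:
  fixes G :: "nat \<Rightarrow> real ^ 'd \<Rightarrow> real ^ 'd" and x xt :: "real ^ 'd"
  assumes n: "n \<ge> 1" and N: "N \<ge> 1" and B: "B \<ge> 1" and b: "b \<ge> 2" and lam: "0 \<le> lam" "lam \<le> 1"
    and lip: "\<And>k. k < n \<Longrightarrow> norm (G k x - G k xt) \<le> L * norm (x - xt)"
    and out: "\<And>us v i. (us, v) \<in> set_pmf (step G n N B b lam sch x xt) \<Longrightarrow> i < N
                \<Longrightarrow> real (n_out (scale sch lam b N us i) b (us i)) \<le> d_lam"
  defines "K \<equiv> (2::real) ^ (b - 1) - 1"
  shows "measure_pmf.expectation (step G n N B b lam sch x xt) (\<lambda>(us, v). (norm (v - gradF G n x))\<^sup>2)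
       \<le> 2 * L\<^sup>2 * (quant_factor sch * real CARD('d) * lam\<^sup>2 / K\<^sup>2 + d_lam * (1 - lam)\<^sup>2
                     + 1 / (real N * real B)) * (norm (x - xt))\<^sup>2"
proof -
  define R where "R = L * norm (x - xt)"
  define V where "V = quant_factor sch * real CARD('d) * (lam * R / K)\<^sup>2 + d_lam * ((1 - lam) * R)\<^sup>2"
  define D where "D = gradF G n x - gradF G n xt"
  let ?P = "Pi_pmf {..<N} (\<lambda>_. 0) (\<lambda>_. sample_pmf n B)"
  let ?us = "\<lambda>Is. messages G B N Is x xt"
  have finP: "finite (set_pmf ?P)" using n by (rule finite_set_workers_sample)
  have "ut + gradF G n xt - gradF G n x = (ut - avg N (?us Is)) + (avg N (?us Is) - D)" for ut Is
    by (simp add: D_def algebra_simps)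
  then have split: "(norm (ut + gradF G n xt - gradF G n x))\<^sup>2
      \<le> 2 * (norm (ut - avg N (?us Is)))\<^sup>2 + 2 * (norm (avg N (?us Is) - D))\<^sup>2" for ut Is
    by (metis power2_norm_add_le)
  have "measure_pmf.expectation (quantized_avg sch lam b N (?us Is))
          (\<lambda>ut. (norm (ut + gradF G n xt - gradF G n x))\<^sup>2)
      \<le> 2 * V + 2 * (norm (avg N (?us Is) - D))\<^sup>2" if Is: "Is \<in> set_pmf ?P" for Is
  proof -
    have quant: "measure_pmf.expectation (quantized_avg sch lam b N (?us Is))
        (\<lambda>ut. (norm (ut - avg N (?us Is)))\<^sup>2) \<le> V"
      unfolding V_def R_def K_def
      by (rule expectation_quantized_messages_le[OF n N B b lam]) (fact lip, fact out, fact Is)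
    have "measure_pmf.expectation (quantized_avg sch lam b N (?us Is))
          (\<lambda>ut. (norm (ut + gradF G n xt - gradF G n x))\<^sup>2)
        \<le> measure_pmf.expectation (quantized_avg sch lam b N (?us Is))
          (\<lambda>ut. 2 * (norm (ut - avg N (?us Is)))\<^sup>2 + 2 * (norm (avg N (?us Is) - D))\<^sup>2)"
      by (rule expectation_mono_finite[OF finite_set_quantized_avg split])
    also have "\<dots> = 2 * measure_pmf.expectation (quantized_avg sch lam b N (?us Is))
          (\<lambda>ut. (norm (ut - avg N (?us Is)))\<^sup>2) + 2 * (norm (avg N (?us Is) - D))\<^sup>2"
      by (simp add: integrable_measure_pmf_finite finite_set_quantized_avg)
    finally show ?thesis using quant by simp
  qed
  then have "measure_pmf.expectation (step G n N B b lam sch x xt) (\<lambda>(us, v). (norm (v - gradF G n x))\<^sup>2)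
      \<le> measure_pmf.expectation ?P (\<lambda>Is. 2 * V + 2 * (norm (avg N (?us Is) - D))\<^sup>2)"
    unfolding expectation_step[OF n] by (rule expectation_mono_finite[OF finP])
  also have "\<dots> = 2 * V + 2 * measure_pmf.expectation ?P (\<lambda>Is. (norm (avg N (?us Is) - D))\<^sup>2)"
    using finP by (simp add: integrable_measure_pmf_finite)
  also have "\<dots> \<le> 2 * V + 2 * (R\<^sup>2 / (real N * real B))"
    using expectation_sampling_error_le[OF n N B, of G x xt R] lip by (simp add: D_def R_def)
  also have "\<dots> = 2 * L\<^sup>2 * (quant_factor sch * real CARD('d) * lam\<^sup>2 / K\<^sup>2 + d_lam * (1 - lam)\<^sup>2
                     + 1 / (real N * real B)) * (norm (x - xt))\<^sup>2"
    unfolding V_def R_def by (simp only: power_mult_distrib power_divide) (simp add: algebra_simps)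
  finally show ?thesis .
qed

section \<open>Expectations over the iterates\<close>

lemma finite_set_step: "n \<ge> 1 \<Longrightarrow> finite (set_pmf (step G n N B b lam sch x xt))"
  unfolding step_eq by (simp add: finite_set_workers_sample finite_set_quantized_avg)

lemma finite_set_inner: "n \<ge> 1 \<Longrightarrow> finite (set_pmf (inner G n N B b lam sch h eta xt t))"
  by (induction t) (auto simp: finite_set_step)

lemma finite_set_snap: "n \<ge> 1 \<Longrightarrow> finite (set_pmf (snap G n N B b lam sch h eta m x0 s))"
  by (induction s) (auto simp: finite_set_inner)

lemma expectation_joint_le:
  fixes F :: "real ^ 'd \<Rightarrow> real ^ 'd \<Rightarrow> (nat \<Rightarrow> real ^ 'd) \<Rightarrow> real ^ 'd \<Rightarrow> real"
  assumes n: "n \<ge> 1"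
    and step: "\<And>xt x. xt \<in> set_pmf (snap G n N B b lam sch h eta m x0 s)
                 \<Longrightarrow> x \<in> set_pmf (inner G n N B b lam sch h eta xt t)
                 \<Longrightarrow> measure_pmf.expectation (step G n N B b lam sch x xt) (\<lambda>(us, v). F xt x us v)
                     \<le> C * (norm (x - xt))\<^sup>2"
  shows "measure_pmf.expectation (joint G n N B b lam sch h eta m x0 s t) (\<lambda>(xt, x, us, v). F xt x us v)
       \<le> C * measure_pmf.expectation (joint G n N B b lam sch h eta m x0 s t) (\<lambda>(xt, x, us, v). (norm (x - xt))\<^sup>2)"
proof -
  let ?S = "snap G n N B b lam sch h eta m x0 s" and ?I = "\<lambda>xt. inner G n N B b lam sch h eta xt t"
  have fin: "finite (set_pmf ?S)" "\<And>xt. finite (set_pmf (?I xt))"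
    "\<And>x xt. finite (set_pmf (step G n N B b lam sch x xt))"
    using n by (simp_all add: finite_set_snap finite_set_inner finite_set_step)
  have joint: "measure_pmf.expectation (joint G n N B b lam sch h eta m x0 s t) (\<lambda>(xt, x, us, v). H xt x us v)
      = measure_pmf.expectation ?S (\<lambda>xt. measure_pmf.expectation (?I xt) (\<lambda>x.
          measure_pmf.expectation (step G n N B b lam sch x xt) (\<lambda>(us, v). H xt x us v)))"
    for H :: "real ^ 'd \<Rightarrow> real ^ 'd \<Rightarrow> (nat \<Rightarrow> real ^ 'd) \<Rightarrow> real ^ 'd \<Rightarrow> real"
    unfolding joint_def using fin by (simp add: expectation_bind_pmf_finite case_prod_unfold)
  have "measure_pmf.expectation (joint G n N B b lam sch h eta m x0 s t) (\<lambda>(xt, x, us, v). F xt x us v)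
      \<le> measure_pmf.expectation ?S (\<lambda>xt. measure_pmf.expectation (?I xt) (\<lambda>x. C * (norm (x - xt))\<^sup>2))"
    unfolding joint using fin step by (intro expectation_mono_finite) auto
  also have "\<dots> = C * measure_pmf.expectation ?S (\<lambda>xt. measure_pmf.expectation (?I xt) (\<lambda>x. (norm (x - xt))\<^sup>2))"
    using fin by (simp add: integrable_measure_pmf_finite)
  also have "measure_pmf.expectation ?S (\<lambda>xt. measure_pmf.expectation (?I xt) (\<lambda>x. (norm (x - xt))\<^sup>2))
      = measure_pmf.expectation (joint G n N B b lam sch h eta m x0 s t) (\<lambda>(xt, x, us, v). (norm (x - xt))\<^sup>2)"
    unfolding joint by (simp add: case_prod_unfold)
  finally show ?thesis .
qed

lemma set_joint:
  assumes "xt \<in> set_pmf (snap G n N B b lam sch h eta m x0 s)"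
    and "x \<in> set_pmf (inner G n N B b lam sch h eta xt t)"
    and "(us, v) \<in> set_pmf (step G n N B b lam sch x xt)"
  shows "(xt, x, us, v) \<in> set_pmf (joint G n N B b lam sch h eta m x0 s t)"
  using assms unfolding joint_def by force

theorem lemma2:
  fixes fs :: "nat \<Rightarrow> real ^ 'd \<Rightarrow> real"
    and G :: "nat \<Rightarrow> real ^ 'd \<Rightarrow> real ^ 'd"
    and h :: "real ^ 'd \<Rightarrow> ereal"
    and n N B S m b s t :: nat
    and L eta lam d_lam :: real
    and x0 :: "real ^ 'd"
    and sch :: scheme
  assumes n_pos: "n \<ge> 1" and N_pos: "N \<ge> 1" and B_pos: "B \<ge> 1"
    and grad: "\<forall>i<n. \<forall>x. (fs i has_derivative (\<lambda>y. G i x \<bullet> y)) (at x)"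
    and lip: "\<forall>i<n. \<forall>x y. norm (G i x - G i y) \<le> L * norm (x - y)"
    and h_proper: "proper_fun h" and h_convex: "convex_ereal h" and h_lsc: "lsc_fun h"
    and eta_pos: "eta > 0"
    and lam: "0 < lam" "lam \<le> 1"
    and b: "b \<ge> 2"
    and s: "s < S" and t: "t < m"
    and d_lam_nonneg: "d_lam \<ge> 0"
    and d_lam: "\<forall>(xt, x, us, v) \<in> set_pmf (joint G n N B b lam sch h eta m x0 s t).
                  \<forall>i<N. real (n_out (scale sch lam b N us i) b (us i)) \<le> d_lam"
  shows
    "(sch = SchA \<or> sch = SchB \<longrightarrow>
       measure_pmf.expectation (joint G n N B b lam sch h eta m x0 s t)
         (\<lambda>(xt, x, us, v). (norm (v - gradF G n x))\<^sup>2)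
       \<le> 2 * L\<^sup>2 * (real CARD('d) * lam\<^sup>2 / (4 * ((2::real) ^ (b - 1) - 1)\<^sup>2)
                     + d_lam * (1 - lam)\<^sup>2 + 1 / (real N * real B))
         * measure_pmf.expectation (joint G n N B b lam sch h eta m x0 s t)
             (\<lambda>(xt, x, us, v). (norm (x - xt))\<^sup>2))
     \<and> (sch = SchC \<longrightarrow>
       measure_pmf.expectation (joint G n N B b lam sch h eta m x0 s t)
         (\<lambda>(xt, x, us, v). (norm (v - gradF G n x))\<^sup>2)
       \<le> 2 * L\<^sup>2 * (3 * real CARD('d) * lam\<^sup>2 / (8 * ((2::real) ^ (b - 1) - 1)\<^sup>2)
                     + d_lam * (1 - lam)\<^sup>2 + 1 / (real N * real B))
         * measure_pmf.expectation (joint G n N B b lam sch h eta m x0 s t)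
             (\<lambda>(xt, x, us, v). (norm (x - xt))\<^sup>2))"
proof -
  define K where "K = (2::real) ^ (b - 1) - 1"
  define C where "C = 2 * L\<^sup>2 * (quant_factor sch * real CARD('d) * lam\<^sup>2 / K\<^sup>2 + d_lam * (1 - lam)\<^sup>2
                                 + 1 / (real N * real B))"
  have "measure_pmf.expectation (step G n N B b lam sch x xt) (\<lambda>(us, v). (norm (v - gradF G n x))\<^sup>2)
      \<le> C * (norm (x - xt))\<^sup>2"
    if "xt \<in> set_pmf (snap G n N B b lam sch h eta m x0 s)" "x \<in> set_pmf (inner G n N B b lam sch h eta xt t)"
    for xt x
    unfolding C_def K_def
  proof (rule expectation_step_le[OF n_pos N_pos B_pos b less_imp_le[OF lam(1)] lam(2)])
    show "norm (G k x - G k xt) \<le> L * norm (x - xt)" if "k < n" for k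
      using lip that by blast
    show "real (n_out (scale sch lam b N us i) b (us i)) \<le> d_lam"
      if "(us, v) \<in> set_pmf (step G n N B b lam sch x xt)" "i < N" for us v i
      using d_lam set_joint[OF \<open>xt \<in> _\<close> \<open>x \<in> _\<close> that(1)] that(2) by fastforce
  qed
  then have "measure_pmf.expectation (joint G n N B b lam sch h eta m x0 s t)
         (\<lambda>(xt, x, us, v). (norm (v - gradF G n x))\<^sup>2)
       \<le> C * measure_pmf.expectation (joint G n N B b lam sch h eta m x0 s t)
         (\<lambda>(xt, x, us, v). (norm (x - xt))\<^sup>2)"
    by (rule expectation_joint_le[OF n_pos])
  then show ?thesis by (auto simp: C_def K_def quant_factor_def)
qed

end
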